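(* Let $f_n(x)=\kappa_nx^{a_n}$ with $\kappa_n>0$ and $0<a_n<1$, and fix $B_n>0$. Then the function $p\mapsto\varphi_n(p,B_n)$ on $[p_n^{\min}(B_n),\infty)$ attains its maximum at $$p=\max\Big\{p_n^{\min}(B_n),\ \Big[\exp\Big(a_n+\tfrac{r_{n,e}\ln2}{B_n}+W\big((\tfrac{a_ng_np_n^{cir}}{\sigma_n^2B_n}-a_n)e^{-a_n-\frac{r_{n,e}\ln2}{B_n}}\big)\Big)-1\Big]\frac{\sigma_n^2B_n}{g_n}\Big\}.$$
   Context: Constants $g_n>0$, $\sigma_n^2>0$, $p_n^{cir}>0$, $r_{n,e}\ge0$, $r_n^{\min}>0$, $r_n^{\min}\ge r_{n,e}$. $r_n(p,B)=B\log_2(1+\frac{g_np}{\sigma_n^2B})$; $\varphi_n(p,B)=\frac{f_n(r_n(p,B)-r_{n,e})}{p+p_n^{cir}}$. $p_n^{\min}(B)=\frac{(2^{r_n^{\min}/B}-1)\sigma_n^2B}{g_n}$. $W$ is the principal branch of the Lambert $W$ function ($W(z)$, $z\ge-1/e$, is the solution $x\ge-1$ of $xe^x=z$). *)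

theory Defs
  imports Complex_Main
begin

text \<open>Principal branch of the Lambert W function: for z \<ge> -1/e, the unique x \<ge> -1 with x e^x = z.\<close>
definition lambertW :: "real \<Rightarrow> real" where
  "lambertW z = (THE x. x \<ge> -1 \<and> x * exp x = z)"

definition rate :: "real \<Rightarrow> real \<Rightarrow> real \<Rightarrow> real \<Rightarrow> real" where
  "rate g \<sigma>2 p B = B * log 2 (1 + g * p / (\<sigma>2 * B))"

definition phi :: "(real \<Rightarrow> real) \<Rightarrow> real \<Rightarrow> real \<Rightarrow> real \<Rightarrow> real \<Rightarrow> real \<Rightarrow> real \<Rightarrow> real" where
  "phi f g \<sigma>2 pcir re p B = f (rate g \<sigma>2 p B - re) / (p + pcir)"

definition pmin :: "real \<Rightarrow> real \<Rightarrow> real \<Rightarrow> real \<Rightarrow> real" where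
  "pmin g \<sigma>2 rmin B = (2 powr (rmin / B) - 1) * \<sigma>2 * B / g"

end

theory Submission
  imports Defs "HOL-Analysis.Analysis"
begin

text \<open>In the variable x = g p / (sigma^2 B) the objective is, up to a positive factor,
  h x = (ln (1 + x) - c)^a / (x + K) with c = r_e ln 2 / B and K = g p_cir / (sigma^2 B).
  Concavity of t^a and of ln give the tangent estimate h x <= h q whenever
  (x - q) (a (q + K) - (ln (1 + q) - c) (1 + q)) <= 0.  Writing ln (1 + q) = a + c + u, the
  bracket equals e^(a + c) (A - u e^u) with A = a (K - 1) e^(-a - c): it vanishes at u = W A
  and is negative beyond, so on x >= x_min the maximum sits at max x_min (e^(a + c + W A) - 1).\<close>

lemma strict_mono_on_xexp: "strict_mono_on {-1..} (\<lambda>x::real. x * exp x)"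
proof (rule strict_mono_onI)
  fix r s :: real
  assume "r \<in> {-1..}" "s \<in> {-1..}" "r < s"
  show "r * exp r < s * exp s"
  proof (rule DERIV_pos_imp_increasing_open[OF \<open>r < s\<close>])
    fix x assume "r < x" "x < s"
    have "((\<lambda>x. x * exp x) has_real_derivative (1 + x) * exp x) (at x)"
      by (auto intro!: derivative_eq_intros simp: algebra_simps)
    moreover have "(1 + x) * exp x > 0"
      using \<open>r \<in> {-1..}\<close> \<open>r < x\<close> by simp
    ultimately show "\<exists>y. ((\<lambda>x. x * exp x) has_real_derivative y) (at x) \<and> y > 0"
      by blast
  qed (intro continuous_intros)
qed

lemma lambertW_eq:
  assumes "x \<ge> -1" "x * exp x = z"
  shows "lambertW z = x"
  unfolding lambertW_def
proof (rule the_equality)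
  fix y assume "y \<ge> -1 \<and> y * exp y = z"
  then show "y = x"
    using strict_mono_on_eqD[OF strict_mono_on_xexp, of x y] assms by simp
qed (use assms in simp)

lemma lambertW_solves:
  assumes "z \<ge> - exp (-1)"
  shows "lambertW z \<ge> -1" and "lambertW z * exp (lambertW z) = z"
proof -
  have "\<exists>x. -1 \<le> x \<and> x \<le> max 1 z \<and> x * exp x = z"
  proof (rule IVT')
    have "z \<le> max 1 z" by simp
    also have "\<dots> \<le> max 1 z * exp (max 1 z)" by (simp add: mult_le_cancel_left1)
    finally show "z \<le> max 1 z * exp (max 1 z)" .
    show "(-1) * exp (-1) \<le> z" "-1 \<le> max 1 z" using assms by auto
    show "continuous_on {-1..max 1 z} (\<lambda>x. x * exp x)" by (intro continuous_intros)
  qed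
  then obtain x where "x \<ge> -1" "x * exp x = z" by blast
  moreover from this have "lambertW z = x" by (rule lambertW_eq)
  ultimately show "lambertW z \<ge> -1" "lambertW z * exp (lambertW z) = z" by simp_all
qed

lemma powr_le_tangent_at_one:
  fixes r a :: real
  assumes "r > 0" "0 \<le> a" "a \<le> 1"
  shows "r powr a \<le> 1 + a * (r - 1)"
  using Youngs_inequality_0[of a "1 - a" r 1] assms by (simp add: algebra_simps)

definition normalized_phi :: "real \<Rightarrow> real \<Rightarrow> real \<Rightarrow> real \<Rightarrow> real" where
  "normalized_phi a c K x = (ln (1 + x) - c) powr a / (x + K)"

lemma normalized_phi_le_of_first_order:
  fixes a c K x q :: real
  assumes a: "0 \<le> a" "a \<le> 1" and q: "q > -1" "q + K > 0" "ln (1 + q) - c > 0"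
    and x: "x > -1" "x + K > 0" "ln (1 + x) - c \<ge> 0"
    and first_order: "(x - q) * (a * (q + K) - (ln (1 + q) - c) * (1 + q)) \<le> 0"
  shows "normalized_phi a c K x \<le> normalized_phi a c K q"
proof (cases "ln (1 + x) - c = 0")
  case True
  then show ?thesis using q by (simp add: normalized_phi_def)
next
  case False
  define S Sq where "S = ln (1 + x) - c" and "Sq = ln (1 + q) - c"
  define r where "r = S / Sq"
  have "S > 0" "Sq > 0" using False x q by (auto simp: S_def Sq_def)
  then have "r > 0" by (simp add: r_def)
  have "r - 1 = (ln (1 + x) - ln (1 + q)) / Sq"
    using \<open>Sq > 0\<close> by (simp add: r_def S_def Sq_def field_simps)
  also have "\<dots> = ln ((1 + x) / (1 + q)) / Sq"
    using x q by (simp add: ln_div)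
  also have "\<dots> \<le> ((1 + x) / (1 + q) - 1) / Sq"
    using x q \<open>Sq > 0\<close> by (intro divide_right_mono ln_le_minus_one) auto
  also have "\<dots> = (x - q) / ((1 + q) * Sq)"
    using q by (simp add: field_simps)
  finally have "a * (r - 1) \<le> a * ((x - q) / ((1 + q) * Sq))"
    using a(1) by (rule mult_left_mono)
  also have "\<dots> \<le> (x - q) / (q + K)"
  proof -
    have "a * (x - q) * (q + K) \<le> (x - q) * ((1 + q) * Sq)"
      using first_order by (simp add: Sq_def algebra_simps)
    moreover have "(1 + q) * Sq > 0" using q \<open>Sq > 0\<close> by simp
    ultimately show ?thesis using q by (simp add: field_simps)
  qed
  finally have "a * (r - 1) \<le> (x - q) / (q + K)" .
  moreover have "(x + K) / (q + K) = 1 + (x - q) / (q + K)"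
    using q by (simp add: field_simps)
  ultimately have "r powr a \<le> (x + K) / (q + K)"
    using powr_le_tangent_at_one[OF \<open>r > 0\<close> a] by linarith
  have rescale: "s / (x + K) \<le> y / (q + K)" if "s \<le> (x + K) / (q + K) * y" for s y
  proof -
    have "s \<le> y / (q + K) * (x + K)"
      using that by (metis mult.commute times_divide_eq_left)
    then show ?thesis using x(2) by (simp add: pos_divide_le_eq)
  qed
  have "S powr a = r powr a * Sq powr a"
    using \<open>S > 0\<close> \<open>Sq > 0\<close> by (simp add: r_def powr_divide)
  also have "\<dots> \<le> (x + K) / (q + K) * Sq powr a"
    using \<open>r powr a \<le> _\<close> by (rule mult_right_mono) simp
  finally have "S powr a / (x + K) \<le> Sq powr a / (q + K)"
    by (rule rescale)
  then show ?thesis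
    by (simp only: normalized_phi_def S_def Sq_def)
qed

definition normalized_phi_stationary_point :: "real \<Rightarrow> real \<Rightarrow> real \<Rightarrow> real" where
  "normalized_phi_stationary_point a c K = exp (a + c + lambertW ((a * K - a) * exp (- a - c))) - 1"

lemma first_order_gap_eq:
  fixes a c K x :: real
  assumes "x > -1"
  defines "u \<equiv> ln (1 + x) - c - a"
  shows "a * (x + K) - (ln (1 + x) - c) * (1 + x)
           = exp (a + c) * ((a * K - a) * exp (- a - c) - u * exp u)"
proof -
  have "exp (a + c) * exp (- a - c) = 1"
    by (simp flip: exp_add)
  moreover have "exp (a + c) * exp u = 1 + x"
    using assms by (simp add: u_def flip: exp_add)
  moreover have "exp (a + c) * ((a * K - a) * exp (- a - c) - u * exp u)
      = (a * K - a) * (exp (a + c) * exp (- a - c)) - u * (exp (a + c) * exp u)"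
    by (simp add: algebra_simps)
  ultimately show ?thesis
    by (simp add: u_def algebra_simps)
qed

lemma lambertW_stationary:
  fixes a c K :: real
  assumes "0 < a" "a \<le> 1" "K > 0" "c \<ge> 0"
  defines "w \<equiv> lambertW ((a * K - a) * exp (- a - c))"
  shows "w \<ge> -1" "w * exp w = (a * K - a) * exp (- a - c)" "w > -a"
proof -
  have "a * exp (- a - c) \<le> a * exp (- a)"
    using assms by (intro mult_left_mono) auto
  moreover have "- a * exp (- a - c) < (a * K - a) * exp (- a - c)"
    using assms by (intro mult_strict_right_mono) auto
  ultimately have gt: "(- a) * exp (- a) < (a * K - a) * exp (- a - c)"
    by linarith
  have "(-1) * exp (-1) \<le> (- a) * exp (- a)"
    using assms by (intro strict_mono_on_leD[OF strict_mono_on_xexp]) auto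
  then have "(a * K - a) * exp (- a - c) \<ge> - exp (-1)"
    using gt by linarith
  then show "w \<ge> -1" "w * exp w = (a * K - a) * exp (- a - c)"
    unfolding w_def by (rule lambertW_solves)+
  with gt show "w > -a"
    using strict_mono_on_less[OF strict_mono_on_xexp, of "-a" w] assms by simp
qed

lemma normalized_phi_max:
  fixes a c K x0 x :: real
  assumes a: "0 < a" "a \<le> 1" and "K > 0" "c \<ge> 0"
    and x0: "x0 > -1" "c \<le> ln (1 + x0)" and "x0 \<le> x"
  shows "normalized_phi a c K x \<le> normalized_phi a c K (max x0 (normalized_phi_stationary_point a c K))"
proof -
  define w where "w = lambertW ((a * K - a) * exp (- a - c))"
  define xs where "xs = normalized_phi_stationary_point a c K"
  define q where "q = max x0 xs"
  define u where "u = ln (1 + q) - c - a"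
  note w = lambertW_stationary[OF assms(1-4), folded w_def]
  have "0 \<le> ln (1 + x0)"
    using x0 \<open>c \<ge> 0\<close> by linarith
  then have "x0 \<ge> 0"
    using x0 by (subst (asm) ln_ge_zero_iff) auto
  have xs: "xs > -1" "ln (1 + xs) = a + c + w"
    by (simp_all add: xs_def normalized_phi_stationary_point_def w_def)
  have "q \<ge> xs" "q \<ge> x0" "q > -1"
    using x0 by (auto simp: q_def)
  then have "ln (1 + xs) \<le> ln (1 + q)"
    using xs(1) by simp
  then have "u \<ge> w"
    using xs by (simp add: u_def)
  then have "u * exp u \<ge> w * exp w"
    using w(1) by (intro strict_mono_on_leD[OF strict_mono_on_xexp]) auto
  have gap_eq: "a * (q + K) - (ln (1 + q) - c) * (1 + q) = exp (a + c) * (w * exp w - u * exp u)"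
    unfolding w(2) u_def by (rule first_order_gap_eq[OF \<open>q > -1\<close>])
  have first_order: "(x - q) * (a * (q + K) - (ln (1 + q) - c) * (1 + q)) \<le> 0"
  proof (cases "q = xs")
    case True
    then have "u = w"
      using xs(2) by (simp add: u_def)
    then show ?thesis
      by (simp add: gap_eq)
  next
    case False
    then have "q = x0"
      by (auto simp: q_def max_def split: if_splits)
    with \<open>x0 \<le> x\<close> have "0 \<le> x - q"
      by simp
    moreover have "exp (a + c) * (w * exp w - u * exp u) \<le> 0"
      using \<open>u * exp u \<ge> w * exp w\<close> by (intro mult_nonneg_nonpos) auto
    ultimately show ?thesis
      unfolding gap_eq by (rule mult_nonneg_nonpos)
  qed
  have "ln (1 + x0) \<le> ln (1 + x)"
    using x0 \<open>x0 \<le> x\<close> by simp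
  then have "c \<le> ln (1 + x)"
    using x0 by linarith
  moreover have "ln (1 + q) - c > 0"
    using \<open>u \<ge> w\<close> w(3) by (simp add: u_def)
  moreover have "q + K > 0" "x > -1" "x + K > 0"
    using \<open>q \<ge> x0\<close> \<open>x0 \<ge> 0\<close> \<open>x0 \<le> x\<close> \<open>K > 0\<close> by linarith+
  ultimately have "normalized_phi a c K x \<le> normalized_phi a c K q"
    using a \<open>q > -1\<close> first_order by (intro normalized_phi_le_of_first_order) simp_all
  then show ?thesis
    by (simp add: q_def xs_def)
qed

lemma phi_scaled_eq_normalized_phi:
  fixes \<kappa> a g \<sigma>2 pcir re B x :: real
  assumes "g > 0" "\<sigma>2 > 0" "B > 0"
  shows "phi (\<lambda>y. \<kappa> * y powr a) g \<sigma>2 pcir re (\<sigma>2 * B / g * x) B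
           = \<kappa> * (B / ln 2) powr a * g / (\<sigma>2 * B)
             * normalized_phi a (re * ln 2 / B) (g * pcir / (\<sigma>2 * B)) x"
proof -
  have rate: "rate g \<sigma>2 (\<sigma>2 * B / g * x) B - re = B / ln 2 * (ln (1 + x) - re * ln 2 / B)"
    using assms by (simp add: rate_def log_def field_simps)
  have total_power: "\<sigma>2 * B / g * x + pcir = \<sigma>2 * B / g * (x + g * pcir / (\<sigma>2 * B))"
    using assms by (simp add: field_simps)
  show ?thesis
    unfolding phi_def normalized_phi_def rate total_power powr_mult using assms by simp
qed

lemma phi_scaled_mono:
  fixes \<kappa> a g \<sigma>2 pcir re B x y :: real
  assumes "g > 0" "\<sigma>2 > 0" "B > 0" "\<kappa> \<ge> 0"
    and "normalized_phi a (re * ln 2 / B) (g * pcir / (\<sigma>2 * B)) x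
           \<le> normalized_phi a (re * ln 2 / B) (g * pcir / (\<sigma>2 * B)) y"
  shows "phi (\<lambda>z. \<kappa> * z powr a) g \<sigma>2 pcir re (\<sigma>2 * B / g * x) B
           \<le> phi (\<lambda>z. \<kappa> * z powr a) g \<sigma>2 pcir re (\<sigma>2 * B / g * y) B"
  unfolding phi_scaled_eq_normalized_phi[OF assms(1-3)]
  using assms by (intro mult_left_mono) simp_all

theorem lemma13:
  fixes g \<sigma>2 pcir re rmin \<kappa> a B :: real
  assumes "g > 0" and "\<sigma>2 > 0" and "pcir > 0" and "re \<ge> 0" and "rmin > 0" and "rmin \<ge> re"
    and "\<kappa> > 0" and "0 < a" and "a < 1" and "B > 0"
  defines "f \<equiv> (\<lambda>x. \<kappa> * x powr a)"
  defines "pstar \<equiv> max (pmin g \<sigma>2 rmin B)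
      ((exp (a + re * ln 2 / B
          + lambertW ((a * g * pcir / (\<sigma>2 * B) - a) * exp (- a - re * ln 2 / B))) - 1)
        * \<sigma>2 * B / g)"
  shows "pstar \<ge> pmin g \<sigma>2 rmin B \<and>
         (\<forall>p. p \<ge> pmin g \<sigma>2 rmin B \<longrightarrow> phi f g \<sigma>2 pcir re p B \<le> phi f g \<sigma>2 pcir re pstar B)"
proof -
  define L c K x0 where "L = \<sigma>2 * B / g" and "c = re * ln 2 / B"
    and "K = g * pcir / (\<sigma>2 * B)" and "x0 = 2 powr (rmin / B) - 1"
  define q where "q = max x0 (normalized_phi_stationary_point a c K)"
  have "L > 0" "K > 0" "c \<ge> 0"
    using assms by (simp_all add: L_def K_def c_def)
  have "x0 > -1" "c \<le> ln (1 + x0)"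
    using assms by (simp_all add: x0_def c_def ln_powr divide_right_mono mult_right_mono)
  have pmin: "pmin g \<sigma>2 rmin B = L * x0"
    by (simp add: pmin_def L_def x0_def)
  have pstar: "pstar = L * q"
    using \<open>L > 0\<close> unfolding pstar_def pmin q_def normalized_phi_stationary_point_def
    by (simp add: max_mult_distrib_left L_def K_def c_def mult_ac)
  have "phi f g \<sigma>2 pcir re p B \<le> phi f g \<sigma>2 pcir re pstar B" if "p \<ge> L * x0" for p
  proof -
    have "x0 \<le> p / L"
      using that \<open>L > 0\<close> by (simp add: pos_le_divide_eq mult.commute)
    then have "normalized_phi a c K (p / L) \<le> normalized_phi a c K q"
      unfolding q_def using assms \<open>K > 0\<close> \<open>c \<ge> 0\<close> \<open>x0 > -1\<close> \<open>c \<le> ln (1 + x0)\<close>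
      by (intro normalized_phi_max) simp_all
    then have "phi f g \<sigma>2 pcir re (L * (p / L)) B \<le> phi f g \<sigma>2 pcir re (L * q) B"
      unfolding f_def L_def c_def K_def using assms by (intro phi_scaled_mono) simp_all
    then show ?thesis
      using \<open>L > 0\<close> by (simp add: pstar)
  qed
  then show ?thesis
    by (simp add: pmin pstar q_def \<open>L > 0\<close>)
qed

end
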